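(* If $X$ is a locally compact Hausdorff space that is not pseudocompact, then $X$ contains a regular closed, $\sigma$-compact, non-pseudocompact subset.
   Context: A space is pseudocompact if every continuous real-valued function on it is bounded. A subset is regular closed if it equals the closure of its interior. *)

theory Defs
  imports "HOL-Analysis.Analysis"
begin

definition pseudocompact_space :: "'a topology \<Rightarrow> bool" where
  "pseudocompact_space X \<longleftrightarrow>
     (\<forall>f. continuous_map X euclideanreal f \<longrightarrow> (\<exists>B. \<forall>x\<in>topspace X. \<bar>f x\<bar> \<le> B))"

definition regular_closed_in :: "'a topology \<Rightarrow> 'a set \<Rightarrow> bool" where
  "regular_closed_in X A \<longleftrightarrow> X closure_of (X interior_of A) = A"

definition sigma_compact_in :: "'a topology \<Rightarrow> 'a set \<Rightarrow> bool" where
  "sigma_compact_in X A \<longleftrightarrow> (\<exists>K :: nat \<Rightarrow> 'a set. (\<forall>n. compactin X (K n)) \<and> A = (\<Union>n. K n))"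

end

theory Submission
  imports Defs
begin

text \<open>Take a continuous \<open>f\<close> that is unbounded on \<open>X\<close> and points \<open>x\<^sub>n\<close> with
  \<open>\<bar>f x\<^sub>n\<bar> > n\<close>. Local compactness gives open neighbourhoods \<open>W\<^sub>n\<close> of \<open>x\<^sub>n\<close> with
  compact closures on which \<open>\<bar>f\<bar> > n\<close>; the last condition makes the family \<open>W\<^sub>n\<close>
  locally finite. Hence the closure \<open>A\<close> of \<open>\<Union>W\<^sub>n\<close> is the union of the compact
  closures of the \<open>W\<^sub>n\<close>, it is regular closed as the closure of an open set, and
  \<open>f\<close> is unbounded on it.\<close>

lemma regular_closed_in_closure_of_openin:
  assumes "openin X U"
  shows "regular_closed_in X (X closure_of U)"
  unfolding regular_closed_in_def
proof
  show "X closure_of (X interior_of (X closure_of U)) \<subseteq> X closure_of U"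
    by (simp add: closure_of_minimal interior_of_subset)
  have "U \<subseteq> X interior_of (X closure_of U)"
    by (simp add: assms closure_of_subset interior_of_maximal openin_subset)
  then show "X closure_of U \<subseteq> X closure_of (X interior_of (X closure_of U))"
    by (rule closure_of_mono)
qed

lemma sigma_compact_in_closure_of_locally_finite_Union:
  fixes W :: "nat \<Rightarrow> 'a set"
  assumes "locally_finite_in X (range W)" and "\<And>n. compactin X (X closure_of W n)"
  shows "sigma_compact_in X (X closure_of (\<Union>n. W n))"
  unfolding sigma_compact_in_def closure_of_locally_finite_Union[OF assms(1)] image_image
  using assms(2) by (intro exI[of _ "\<lambda>n. X closure_of W n"]) simp

lemma locally_finite_in_range_abs_ge:
  assumes f: "continuous_map X euclideanreal f"
    and W: "\<And>n. W n \<subseteq> topspace X" and ge: "\<And>n y. y \<in> W n \<Longrightarrow> real n \<le> \<bar>f y\<bar>"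
  shows "locally_finite_in X (range W)"
  unfolding locally_finite_in_def
proof (intro conjI ballI)
  show "\<Union> (range W) \<subseteq> topspace X"
    using W by blast
  fix y assume y: "y \<in> topspace X"
  define T where "T = {z \<in> topspace X. f z \<in> {f y - 1 <..< f y + 1}}"
  have "openin X T"
    unfolding T_def by (rule openin_continuous_map_preimage[OF f]) auto
  moreover have "y \<in> T"
    using y by (simp add: T_def)
  moreover have "{S \<in> range W. S \<inter> T \<noteq> {}} \<subseteq> W ` {..nat \<lceil>\<bar>f y\<bar> + 1\<rceil>}"
  proof
    fix S assume "S \<in> {S \<in> range W. S \<inter> T \<noteq> {}}"
    then obtain n z where S: "S = W n" and "z \<in> W n" "z \<in> T"
      by auto
    then have "real n \<le> \<bar>f z\<bar>" "\<bar>f z - f y\<bar> < 1"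
      using ge by (auto simp: T_def abs_diff_less_iff)
    then have "n \<le> nat \<lceil>\<bar>f y\<bar> + 1\<rceil>"
      by linarith
    then show "S \<in> W ` {..nat \<lceil>\<bar>f y\<bar> + 1\<rceil>}"
      using S by auto
  qed
  then have "finite {S \<in> range W. S \<inter> T \<noteq> {}}"
    using finite_subset by blast
  ultimately show "\<exists>V. openin X V \<and> y \<in> V \<and> finite {S \<in> range W. S \<inter> V \<noteq> {}}"
    by blast
qed

lemma locally_compact_Hausdorff_open_compact_closure_of:
  assumes "locally_compact_space X" "Hausdorff_space X" "openin X U" "x \<in> U"
  obtains W where "openin X W" "compactin X (X closure_of W)" "x \<in> W" "W \<subseteq> U"
proof -
  have "neighbourhood_base_of (\<lambda>W. openin X W \<and> compactin X (X closure_of W)) X"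
    using assms(1,2) locally_compact_space_neighbourhood_base_open_closure_of by blast
  then obtain V W where "openin X W" "compactin X (X closure_of W)" "x \<in> V" "V \<subseteq> W" "W \<subseteq> U"
    using assms(3,4) unfolding neighbourhood_base_of by metis
  then show ?thesis
    using that by blast
qed

lemma not_pseudocompact_space_subtopology:
  assumes "continuous_map X euclideanreal f" and "\<And>B. \<exists>x \<in> topspace X \<inter> A. B < \<bar>f x\<bar>"
  shows "\<not> pseudocompact_space (subtopology X A)"
  using assms continuous_map_from_subtopology
  unfolding pseudocompact_space_def topspace_subtopology by (meson not_le)

lemma open_compact_closure_of_sets_abs_gt:
  assumes "locally_compact_space X" "Hausdorff_space X" "continuous_map X euclideanreal f"
    and unbounded: "\<And>B. \<exists>x \<in> topspace X. B < \<bar>f x\<bar>"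
  obtains W :: "nat \<Rightarrow> 'a set"
  where "\<And>n. openin X (W n)" "\<And>n. compactin X (X closure_of W n)" "\<And>n. W n \<noteq> {}"
    and "\<And>n y. y \<in> W n \<Longrightarrow> real n < \<bar>f y\<bar>"
proof -
  define U where "U n = {y \<in> topspace X. \<bar>f y\<bar> \<in> {real n<..}}" for n
  have U_open: "openin X (U n)" for n
    unfolding U_def using assms(3)
    by (intro openin_continuous_map_preimage) (auto intro: continuous_intros)
  have "\<exists>V. openin X V \<and> compactin X (X closure_of V) \<and> V \<noteq> {} \<and> V \<subseteq> U n" for n
  proof -
    obtain y where "y \<in> U n"
      using unbounded[of "real n"] by (auto simp: U_def)
    then obtain V where "openin X V" "compactin X (X closure_of V)" "y \<in> V" "V \<subseteq> U n"
      by (rule locally_compact_Hausdorff_open_compact_closure_of[OF assms(1,2) U_open])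
    then show ?thesis
      by blast
  qed
  then obtain W where W: "\<And>n. openin X (W n)" "\<And>n. compactin X (X closure_of W n)"
    "\<And>n. W n \<noteq> {}" and WU: "\<And>n. W n \<subseteq> U n"
    by metis
  show ?thesis
  proof (rule that[OF W])
    show "real n < \<bar>f y\<bar>" if "y \<in> W n" for n y
      using WU that by (auto simp: U_def)
  qed
qed

theorem lemma3p3:
  fixes X :: "'a topology"
  assumes "locally_compact_space X" and "Hausdorff_space X"
    and "\<not> pseudocompact_space X"
  shows "\<exists>A. A \<subseteq> topspace X \<and> regular_closed_in X A \<and> sigma_compact_in X A
             \<and> \<not> pseudocompact_space (subtopology X A)"
proof -
  obtain f where f: "continuous_map X euclideanreal f"
    and "\<And>B. \<exists>x \<in> topspace X. B < \<bar>f x\<bar>"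
    using assms(3) unfolding pseudocompact_space_def by (meson not_le)
  then obtain W where W: "\<And>n. openin X (W n)" "\<And>n. compactin X (X closure_of W n)"
    and nonempty: "\<And>n. W n \<noteq> {}" and fW: "\<And>n y. y \<in> W n \<Longrightarrow> real n < \<bar>f y\<bar>"
    using open_compact_closure_of_sets_abs_gt[OF assms(1,2)] by metis
  define A where "A = X closure_of (\<Union>n. W n)"
  have A: "A \<subseteq> topspace X"
    unfolding A_def by (rule closure_of_subset_topspace)
  have WA: "W n \<subseteq> A" for n
  proof -
    have "W n \<subseteq> (\<Union>n. W n)"
      by blast
    also have "\<dots> \<subseteq> A"
      unfolding A_def by (rule closure_of_subset) (simp add: UN_least W(1) openin_subset)
    finally show ?thesis .
  qed
  have "locally_finite_in X (range W)"
    using W(1) openin_subset fW by (intro locally_finite_in_range_abs_ge[OF f]) (auto intro: less_imp_le)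
  then have "sigma_compact_in X A"
    unfolding A_def using W(2) by (rule sigma_compact_in_closure_of_locally_finite_Union)
  moreover have "\<exists>y \<in> topspace X \<inter> A. B < \<bar>f y\<bar>" for B
  proof -
    obtain n y where "B < real n" "y \<in> W n"
      using reals_Archimedean2 nonempty by blast
    then show ?thesis
      using A WA fW by (meson IntI less_trans subsetD)
  qed
  moreover have "regular_closed_in X A"
    unfolding A_def using W(1) by (intro regular_closed_in_closure_of_openin) auto
  ultimately show ?thesis
    using A not_pseudocompact_space_subtopology[OF f] by blast
qed

end
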